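(* Let $(X_n)_{n\in\mathbb{N}}$ be i.i.d. real random variables with distribution function $F$ and survival function $\bar F(x)=\mathbb{P}(X_1>x)$. Assume that there exist $x_0>0$, $\alpha>0$ and a slowly varying function $L$ such that $\bar F(x)=x^{-\alpha}L(x)$ for all $x>x_0$, and that $X_1$ admits a (Lebesgue) density $f$ which is non-increasing on $[x_1,\infty)$ for some $x_1$. Let $X_{(n)}=\max_{1\le i\le n}X_i$, $a_n=F^{\leftarrow}(1-1/n)$, and for $n\ge 2$ let $Z_n=\left(X_{(n)}/a_n\right)^{\alpha/\log n}$ (on the event $X_{(n)}>0$). Then for every Borel set $A\subset[1,\infty)$, \[ \lim_{n\to\infty}\frac{1}{\log n}\log \mathbb{P}(Z_n\in A) = -\operatorname*{ess\,inf}_{x\in A}\log x, \] where the essential infimum is taken with respect to Lebesgue measure (with the conventions $\log 0=-\infty$ and that the essential infimum over a Lebesgue-null set is $+\infty$).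
   Context: A function $L:(0,\infty)\to(0,\infty)$ is slowly varying if $\lim_{x\to\infty}L(tx)/L(x)=1$ for all $t>0$. For a distribution function $F$, $F^{\leftarrow}(u)=\inf\{x\in\mathbb{R}: F(x)\ge u\}$ is its left-inverse; $a_n>0$ for all sufficiently large $n$, and $\bar F(a_n)\le 1/n$. The value of $Z_n$ on $\{X_{(n)}\le 0\}$ is irrelevant for events $\{Z_n\in A\}$ with $A\subset[1,\infty)$ once $a_n>0$. *)

theory Defs
  imports "HOL-Probability.Probability"
begin

definition slowly_varying :: "(real \<Rightarrow> real) \<Rightarrow> bool" where
  "slowly_varying L \<longleftrightarrow> (\<forall>x>0. L x > 0) \<and>
     (\<forall>t>0. ((\<lambda>x. L (t * x) / L x) \<longlongrightarrow> 1) at_top)"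

definition left_inverse :: "(real \<Rightarrow> real) \<Rightarrow> real \<Rightarrow> real" where
  "left_inverse F u = Inf {x. F x \<ge> u}"

definition sample_max :: "(nat \<Rightarrow> 'a \<Rightarrow> real) \<Rightarrow> nat \<Rightarrow> 'a \<Rightarrow> real" where
  "sample_max X n \<omega> = Max ((\<lambda>i. X i \<omega>) ` {..<n})"

definition ln_ext :: "real \<Rightarrow> ereal" where
  "ln_ext p = (if p = 0 then -\<infinity> else ereal (ln p))"

definition essinf_lebesgue :: "real set \<Rightarrow> (real \<Rightarrow> ereal) \<Rightarrow> ereal" where
  "essinf_lebesgue A g = Sup {c. emeasure lborel {x \<in> A. g x < c} = 0}"

end

theory Submission
  imports Defs "HOL-Real_Asymp.Real_Asymp"
begin

text \<open>
  The survival function \<open>G x = P(X 0 > x)\<close> is non-increasing with \<open>G (2x) / G x \<longrightarrow> 2^(-\<alpha>)\<close>,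
  which forces \<open>ln G x / ln x \<longrightarrow> -\<alpha>\<close>; hence the quantiles \<open>a_n\<close> satisfy
  \<open>ln a_n / ln n \<longrightarrow> 1/\<alpha>\<close>. Since \<open>Z_n \<ge> e^s\<close> exactly when the maximum is at least
  \<open>a_n n^(s/\<alpha>)\<close>, the union bound gives \<open>P(Z_n \<ge> e^s) \<le> n G(a_n n^(s/\<alpha>)) = n^(-s + o(1))\<close>.
  Conversely, for a set \<open>A' \<subseteq> (e^l0, e^l1]\<close> of positive measure, the probability that
  exactly one \<open>X_i\<close> lands in the preimage of \<open>A'\<close> while all others stay below it is at
  least \<open>n e^(-1) P(X 0 \<in> preimage)\<close>, as the preimage lies above \<open>a_n\<close> and
  \<open>(1 - 1/n)^(n-1) \<ge> e^(-1)\<close>. Substituting \<open>y = a_n t^(ln n/\<alpha>)\<close> and using the bound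
  \<open>f x \<ge> c G x / x\<close>, which follows from the monotonicity of \<open>f\<close>, this is at least
  \<open>n^(-l1 - (l1 - l0)/\<alpha> + o(1))\<close>. Windows around the essential infimum \<open>s\<close> of \<open>ln\<close> on \<open>A\<close>
  give matching rates \<open>-s\<close>. Lebesgue-null parts of \<open>A\<close> do not matter, because \<open>X 0\<close> has a
  density and \<open>t \<mapsto> a_n t^(ln n/\<alpha>)\<close> is differentiable.
\<close>

section \<open>Real-analytic estimates\<close>

lemma antimono_doubling_bounds:
  fixes g :: "real \<Rightarrow> real"
  assumes "antimono g" and "Y > 0"
    and incr: "\<And>x. x \<ge> Y \<Longrightarrow> d1 \<le> g (2 * x) - g x \<and> g (2 * x) - g x \<le> d2"
    and "x \<ge> Y"
  shows "g Y - \<bar>d1\<bar> + d1 * log 2 (x / Y) \<le> g x" and "g x \<le> g Y + \<bar>d2\<bar> + d2 * log 2 (x / Y)"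
proof -
  have dyadic: "g Y + k * d1 \<le> g (2 ^ k * Y) \<and> g (2 ^ k * Y) \<le> g Y + k * d2" for k :: nat
  proof (induction k)
    case (Suc k)
    have "2 ^ k * Y \<ge> Y" using \<open>Y > 0\<close> by simp
    then show ?case using Suc incr[of "2 ^ k * Y"] by (simp add: algebra_simps)
  qed simp
  define l where "l = log 2 (x / Y)"
  define k where "k = nat \<lfloor>l\<rfloor>"
  have "l \<ge> 0" using assms by (simp add: l_def)
  then have k: "real k \<le> l" "l < real k + 1" by (simp_all add: k_def)
  have "2 ^ k * Y \<le> x"
  proof -
    have "2 ^ k = 2 powr real k" by (simp add: powr_realpow)
    also have "\<dots> \<le> 2 powr l" using k by simp
    also have "\<dots> = x / Y" using assms by (simp add: l_def)
    finally show ?thesis using \<open>Y > 0\<close> by (simp add: le_divide_eq)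
  qed
  moreover have "x \<le> 2 ^ (k + 1) * Y"
  proof -
    have "x / Y = 2 powr l" using assms by (simp add: l_def)
    also have "\<dots> \<le> 2 powr real (k + 1)" using k by simp
    also have "\<dots> = 2 ^ (k + 1)" by (rule powr_realpow) simp
    finally show ?thesis using \<open>Y > 0\<close> by (simp add: divide_le_eq)
  qed
  ultimately have "g (2 ^ (k + 1) * Y) \<le> g x" "g x \<le> g (2 ^ k * Y)"
    using \<open>antimono g\<close> by (auto dest: antimonoD)
  moreover have "\<bar>(real k + 1 - l) * d1\<bar> \<le> \<bar>d1\<bar>" "\<bar>(real k - l) * d2\<bar> \<le> \<bar>d2\<bar>"
    using k by (auto simp: abs_mult intro!: mult_left_le_one_le)
  ultimately show "g Y - \<bar>d1\<bar> + d1 * l \<le> g x" "g x \<le> g Y + \<bar>d2\<bar> + d2 * l"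
    using dyadic[of k] dyadic[of "k + 1"] by (auto simp: algebra_simps abs_le_iff)
qed

lemma antimono_doubling_eventually_bounds:
  fixes g :: "real \<Rightarrow> real"
  assumes "antimono g" and lim: "((\<lambda>x. g (2 * x) - g x) \<longlongrightarrow> c) at_top" and "e > 0"
  shows "eventually (\<lambda>x. (c - 2 * e) / ln 2 \<le> g x / ln x \<and> g x / ln x \<le> (c + 2 * e) / ln 2) at_top"
proof -
  have "eventually (\<lambda>x. dist (g (2 * x) - g x) c < e) at_top"
    using lim \<open>e > 0\<close> by (simp add: tendsto_iff)
  then obtain Y0 where Y0: "\<And>x. x \<ge> Y0 \<Longrightarrow> dist (g (2 * x) - g x) c < e"
    by (auto simp: eventually_at_top_linorder)
  define Y where "Y = max Y0 1"
  have "Y > 0" by (simp add: Y_def)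
  have incr: "c - e \<le> g (2 * x) - g x \<and> g (2 * x) - g x \<le> c + e" if "x \<ge> Y" for x
    using Y0[of x] that by (auto simp: Y_def dist_real_def)
  define lo where "lo x = (g Y - \<bar>c - e\<bar> + (c - e) * ((ln x - ln Y) / ln 2)) / ln x" for x
  define up where "up x = (g Y + \<bar>c + e\<bar> + (c + e) * ((ln x - ln Y) / ln 2)) / ln x" for x
  have "(lo \<longlongrightarrow> (c - e) / ln 2) at_top"
    unfolding lo_def by real_asymp (simp add: divide_inverse)
  then have "eventually (\<lambda>x. (c - 2 * e) / ln 2 < lo x) at_top"
    by (rule order_tendstoD) (use \<open>e > 0\<close> in \<open>simp add: divide_strict_right_mono\<close>)
  moreover have "(up \<longlongrightarrow> (c + e) / ln 2) at_top"
    unfolding up_def by real_asymp (simp add: divide_inverse)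
  then have "eventually (\<lambda>x. up x < (c + 2 * e) / ln 2) at_top"
    by (rule order_tendstoD) (use \<open>e > 0\<close> in \<open>simp add: divide_strict_right_mono\<close>)
  moreover have "eventually (\<lambda>x. lo x \<le> g x / ln x \<and> g x / ln x \<le> up x) at_top"
    using eventually_ge_at_top[of "max Y 2"]
  proof eventually_elim
    case (elim x)
    have "ln x > 0" "log 2 (x / Y) = (ln x - ln Y) / ln 2"
      using elim \<open>Y > 0\<close> by (auto simp: log_def ln_div)
    then show ?case
      using antimono_doubling_bounds[OF \<open>antimono g\<close> \<open>Y > 0\<close> incr, of x] elim
      by (simp add: lo_def up_def divide_right_mono)
  qed
  ultimately show ?thesis by eventually_elim auto
qed

lemma antimono_doubling_tendsto_div_ln:
  fixes g :: "real \<Rightarrow> real"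
  assumes "antimono g" and "((\<lambda>x. g (2 * x) - g x) \<longlongrightarrow> c) at_top"
  shows "((\<lambda>x. g x / ln x) \<longlongrightarrow> c / ln 2) at_top"
proof (rule tendstoI)
  fix r :: real assume "r > 0"
  define e where "e = r * ln 2 / 4"
  have "e > 0" using \<open>r > 0\<close> by (simp add: e_def)
  have "(c - 2 * e) / ln 2 = c / ln 2 - r / 2" "(c + 2 * e) / ln 2 = c / ln 2 + r / 2"
    by (simp_all add: e_def add_divide_distrib diff_divide_distrib)
  then have "eventually (\<lambda>x. c / ln 2 - r / 2 \<le> g x / ln x \<and> g x / ln x \<le> c / ln 2 + r / 2) at_top"
    using antimono_doubling_eventually_bounds[OF assms \<open>e > 0\<close>] by simp
  then show "eventually (\<lambda>x. dist (g x / ln x) (c / ln 2) < r) at_top"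
    by eventually_elim (use \<open>r > 0\<close> in \<open>simp add: dist_real_def abs_less_iff\<close>)
qed

lemma power_one_minus_inverse_ge_exp:
  assumes "n \<ge> (2::nat)"
  shows "exp (-1) \<le> (1 - 1 / real n) ^ (n - 1)"
proof -
  define m where "m = n - 1"
  have m: "m \<ge> 1" "real n = real m + 1" using assms by (auto simp: m_def)
  have "(1 + 1 / real m) ^ m \<le> exp (1 / real m) ^ m"
    by (intro power_mono exp_ge_add_one_self) simp
  also have "\<dots> = exp 1" using m by (simp add: exp_of_nat_mult[symmetric])
  finally have "(1 + 1 / real m) ^ m \<le> exp 1" .
  moreover have "0 < (1 + 1 / real m) ^ m" by (simp add: add_pos_nonneg)
  ultimately have "1 / exp 1 \<le> 1 / (1 + 1 / real m) ^ m"
    by (intro divide_left_mono) auto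
  also have "1 / (1 + 1 / real m) ^ m = (1 - 1 / real n) ^ (n - 1)"
    using m by (simp add: m_def power_one_over field_simps)
  finally show ?thesis by (simp add: exp_minus inverse_eq_divide)
qed

section \<open>Quantiles, essential infima and power maps\<close>

lemma (in real_distribution) cdf_left_inverse:
  assumes "0 < u" "u < 1"
  shows "u \<le> cdf M (left_inverse (cdf M) u)"
    and "x < left_inverse (cdf M) u \<Longrightarrow> cdf M x < u"
proof -
  define S where "S = {x. cdf M x \<ge> u}"
  have inv: "left_inverse (cdf M) u = Inf S" by (simp add: left_inverse_def S_def)
  have "eventually (\<lambda>x. cdf M x > u) at_top"
    using order_tendstoD(1)[OF cdf_lim_at_top_prob \<open>u < 1\<close>] .
  then obtain x0 where "u < cdf M x0" by (metis eventually_at_top_linorder order_refl)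
  then have "S \<noteq> {}" unfolding S_def by (blast intro: less_imp_le)
  have "eventually (\<lambda>x. cdf M x < u) at_bot"
    using order_tendstoD(2)[OF cdf_lim_at_bot \<open>0 < u\<close>] .
  then obtain B where B: "\<And>x. x \<le> B \<Longrightarrow> cdf M x < u" by (auto simp: eventually_at_bot_linorder)
  have "B \<le> s" if "s \<in> S" for s
    using B[of s] that by (fastforce simp: S_def)
  then have "bdd_below S" by (rule bdd_belowI)
  show "cdf M x < u" if "x < left_inverse (cdf M) u"
  proof (rule ccontr)
    assume "\<not> cdf M x < u"
    then have "Inf S \<le> x" by (intro cInf_lower \<open>bdd_below S\<close>) (simp add: S_def)
    then show False using that inv by simp
  qed
  have above: "eventually (\<lambda>y. u \<le> cdf M y) (at_right (Inf S))"
    using eventually_at_right_less[of "Inf S"]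
  proof eventually_elim
    case (elim y)
    then obtain s where "s \<in> S" "s < y" using cInf_lessD[OF \<open>S \<noteq> {}\<close>] by blast
    then show ?case using cdf_nondecreasing[of s y] by (simp add: S_def)
  qed
  have "(cdf M \<longlongrightarrow> cdf M (Inf S)) (at_right (Inf S))"
    using cdf_is_right_cont by (simp add: continuous_within)
  then show "u \<le> cdf M (left_inverse (cdf M) u)"
    unfolding inv by (rule tendsto_lowerbound[OF _ above]) simp
qed

lemma essinf_lebesgue_null_set:
  assumes "A \<in> sets borel" "emeasure lborel A = 0"
  shows "essinf_lebesgue A g = \<infinity>"
proof -
  have "emeasure lborel {x \<in> A. g x < c} = 0" for c
    using emeasure_mono[of "{x \<in> A. g x < c}" A lborel] assms by simp
  then show ?thesis by (simp add: essinf_lebesgue_def top_ereal_def)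
qed

lemma emeasure_ln_less_nonzero:
  assumes A[measurable]: "A \<in> sets borel" and "emeasure lborel A \<noteq> 0"
  obtains k :: nat where "emeasure lborel {x \<in> A. ln x < real k} \<noteq> 0"
proof (rule ccontr)
  assume "\<not> thesis"
  then have "emeasure lborel {x \<in> A. ln x < real k} = 0" for k :: nat
    using that by blast
  moreover have [measurable]: "{x \<in> A. ln x < r} \<in> sets borel" for r
    by measurable
  ultimately have null: "(\<Union>k::nat. {x \<in> A. ln x < real k}) \<in> null_sets lborel"
    by (intro null_sets_UN null_setsI) auto
  have cover: "A \<subseteq> (\<Union>k::nat. {x \<in> A. ln x < real k})"
  proof
    fix x assume "x \<in> A"
    obtain k :: nat where "ln x < real k" using reals_Archimedean2 by blast
    with \<open>x \<in> A\<close> show "x \<in> (\<Union>k::nat. {x \<in> A. ln x < real k})" by blast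
  qed
  have "A \<in> null_sets lborel"
    using null_sets_subset[OF null _ cover] by simp
  then show False using \<open>emeasure lborel A \<noteq> 0\<close> by blast
qed

lemma essinf_lebesgue_ln:
  assumes A[measurable]: "A \<in> sets borel" and "A \<subseteq> {1..}" and "emeasure lborel A \<noteq> 0"
  obtains s where "s \<ge> 0" and "essinf_lebesgue A (\<lambda>x. ereal (ln x)) = ereal s"
    and "\<And>c. c < s \<Longrightarrow> emeasure lborel {x \<in> A. ln x < c} = 0"
    and "\<And>c. s < c \<Longrightarrow> emeasure lborel {x \<in> A. ln x < c} \<noteq> 0"
proof -
  define S where "S = {c. emeasure lborel {x \<in> A. ereal (ln x) < c} = 0}"
  have S_real: "ereal c \<in> S \<longleftrightarrow> emeasure lborel {x \<in> A. ln x < c} = 0" for c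
    by (simp add: S_def)
  have [measurable]: "{x \<in> A. ereal (ln x) < c} \<in> sets borel" for c
    by measurable
  have S_down: "d \<in> S" if "c \<in> S" "d \<le> c" for c d
  proof -
    have "{x \<in> A. ereal (ln x) < d} \<subseteq> {x \<in> A. ereal (ln x) < c}"
      using \<open>d \<le> c\<close> by (auto intro: order.strict_trans2)
    then have "emeasure lborel {x \<in> A. ereal (ln x) < d} \<le> emeasure lborel {x \<in> A. ereal (ln x) < c}"
      by (rule emeasure_mono) simp
    then show ?thesis using \<open>c \<in> S\<close> by (simp add: S_def)
  qed
  obtain k :: nat where k: "emeasure lborel {x \<in> A. ln x < real k} \<noteq> 0"
    using emeasure_ln_less_nonzero[OF A \<open>emeasure lborel A \<noteq> 0\<close>] .
  have "Sup S \<le> ereal (real k)"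
  proof (rule Sup_least, rule ccontr)
    fix c assume "c \<in> S" "\<not> c \<le> ereal (real k)"
    then have "ereal (real k) \<le> c" by (meson linear)
    with \<open>c \<in> S\<close> have "ereal (real k) \<in> S" by (rule S_down)
    then show False using k S_real[of "real k"] by simp
  qed
  moreover have empty: "{x \<in> A. ln x < 0} = {}" using \<open>A \<subseteq> {1..}\<close> by auto
  have "ereal 0 \<in> S" unfolding S_real empty by simp
  then have "ereal 0 \<le> Sup S" by (rule Sup_upper)
  ultimately obtain s where s: "Sup S = ereal s" "s \<ge> 0" by (cases "Sup S") auto
  show ?thesis
  proof
    show "essinf_lebesgue A (\<lambda>x. ereal (ln x)) = ereal s"
      using s by (simp add: essinf_lebesgue_def S_def)
    show "emeasure lborel {x \<in> A. ln x < c} = 0" if "c < s" for c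
    proof -
      have "ereal c < Sup S" using \<open>c < s\<close> s by simp
      then obtain d where "d \<in> S" "ereal c < d" by (auto simp: less_Sup_iff)
      then have "ereal c \<in> S" by (meson S_down less_imp_le)
      then show ?thesis using S_real by simp
    qed
    show "emeasure lborel {x \<in> A. ln x < c} \<noteq> 0" if "s < c" for c
    proof
      assume "emeasure lborel {x \<in> A. ln x < c} = 0"
      then have "ereal c \<le> Sup S" using S_real by (intro Sup_upper) simp
      then show False using \<open>s < c\<close> s by simp
    qed
  qed (use s in auto)
qed

lemma essinf_window_measure_pos:
  fixes A :: "real set"
  assumes A[measurable]: "A \<in> sets borel" and "A \<subseteq> {1..}" and "s \<ge> 0" "\<delta> > 0"
    and below: "\<And>c. c < s \<Longrightarrow> emeasure lborel {x \<in> A. ln x < c} = 0"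
    and above: "\<And>c. s < c \<Longrightarrow> emeasure lborel {x \<in> A. ln x < c} \<noteq> 0"
  shows "0 < measure lborel (A \<inter> {exp (max 0 (s - \<delta>))<..exp (s + \<delta>)})"
proof -
  define W where "W = A \<inter> {exp (max 0 (s - \<delta>))<..exp (s + \<delta>)}"
  define N where "N = {1} \<union> {x \<in> A. ln x < s - \<delta> / 2}"
  have [measurable]: "W \<in> sets borel" "N \<in> sets borel" by (simp_all add: W_def N_def)
  have "emeasure lborel N = 0"
    using below[of "s - \<delta> / 2"] \<open>\<delta> > 0\<close> unfolding N_def
    by (intro null_setsD1 null_sets.Un) (auto simp: null_sets_def)
  have "{x \<in> A. ln x < s + \<delta>} \<subseteq> N \<union> W"
  proof
    fix x assume x: "x \<in> {x \<in> A. ln x < s + \<delta>}"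
    show "x \<in> N \<union> W"
    proof (cases "x = 1 \<or> ln x < s - \<delta> / 2")
      case False
      with x \<open>A \<subseteq> {1..}\<close> have "max 0 (s - \<delta>) < ln x" "x > 0"
        using \<open>\<delta> > 0\<close> by auto
      then have "exp (max 0 (s - \<delta>)) < x" by (metis exp_less_cancel_iff exp_ln)
      moreover have "x < exp (s + \<delta>)" using x \<open>x > 0\<close> by (metis exp_less_cancel_iff exp_ln mem_Collect_eq)
      ultimately show ?thesis using x by (simp add: W_def)
    qed (use x in \<open>auto simp: N_def\<close>)
  qed
  then have "emeasure lborel {x \<in> A. ln x < s + \<delta>} \<le> emeasure lborel (N \<union> W)"
    by (rule emeasure_mono) simp
  also have "\<dots> \<le> emeasure lborel N + emeasure lborel W"
    by (rule emeasure_subadditive) simp_all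
  finally have "emeasure lborel W \<noteq> 0"
    using above[of "s + \<delta>"] \<open>\<delta> > 0\<close> \<open>emeasure lborel N = 0\<close> by auto
  moreover have "emeasure lborel W < top"
  proof -
    have "emeasure lborel W \<le> emeasure lborel {exp (max 0 (s - \<delta>))..exp (s + \<delta>)}"
      by (rule emeasure_mono) (auto simp: W_def)
    also have "\<dots> = ennreal (exp (s + \<delta>) - exp (max 0 (s - \<delta>)))"
      using \<open>s \<ge> 0\<close> \<open>\<delta> > 0\<close> by simp
    finally show ?thesis using ennreal_less_top by (rule le_less_trans)
  qed
  ultimately show ?thesis
    by (simp add: W_def measure_def enn2real_positive_iff zero_less_iff_neq_zero)
qed

lemma powr_preimage_subset:
  fixes a r t0 :: real
  assumes "a > 0" "r > 0" "t0 \<ge> 0" "A \<subseteq> {t0<..}"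
  shows "{y. 0 < y \<and> (y / a) powr r \<in> A} \<subseteq> {a * t0 powr (1 / r)<..}"
proof
  fix y assume "y \<in> {y. 0 < y \<and> (y / a) powr r \<in> A}"
  then have "0 < y" "t0 < (y / a) powr r" using assms by auto
  then have "t0 powr (1 / r) < ((y / a) powr r) powr (1 / r)"
    using assms by (intro powr_less_mono2) auto
  also have "\<dots> = y / a" using assms \<open>0 < y\<close> by (simp add: powr_powr)
  finally show "y \<in> {a * t0 powr (1 / r)<..}" using assms by (simp add: less_divide_eq mult.commute)
qed

lemma null_sets_powr_preimage:
  fixes a r :: real
  assumes N: "N \<in> null_sets lborel" "N \<subseteq> {0<..}" and "a > 0" "r > 0"
  shows "{y. 0 < y \<and> (y / a) powr r \<in> N} \<in> null_sets lborel"
proof -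
  define B where "B = {y. 0 < y \<and> (y / a) powr r \<in> N}"
  define \<phi> where "\<phi> t = a * t powr (1 / r)" for t
  have [measurable]: "N \<in> sets borel" using N by auto
  have "B \<in> sets borel" unfolding B_def by measurable
  have "B \<subseteq> \<phi> ` N"
  proof
    fix y assume "y \<in> B"
    then have "\<phi> ((y / a) powr r) = y" "(y / a) powr r \<in> N"
      using \<open>a > 0\<close> \<open>r > 0\<close> by (auto simp: B_def \<phi>_def powr_powr)
    then show "y \<in> \<phi> ` N" by force
  qed
  moreover have "negligible N"
    using N null_sets_completion_iff[of N lborel] by (auto simp: negligible_iff_null_sets)
  moreover have "\<phi> differentiable_on N"
  proof (rule differentiable_at_imp_differentiable_on)
    fix t assume "t \<in> N"
    then have "(\<phi> has_real_derivative a * (1 / r * t powr (1 / r - 1))) (at t)"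
      using N unfolding \<phi>_def by (intro DERIV_cmult has_real_derivative_powr) auto
    then show "\<phi> differentiable (at t)"
      by (intro field_differentiable_imp_differentiable) (auto simp: field_differentiable_def)
  qed
  ultimately have "negligible B"
    using negligible_differentiable_image_negligible negligible_subset by blast
  then show ?thesis
    using \<open>B \<in> sets borel\<close> null_sets_completion_iff[of B lborel]
    by (simp add: B_def negligible_iff_null_sets)
qed

lemma nn_integral_powr_preimage_ge:
  fixes g :: "real \<Rightarrow> real" and a r K t0 t1 :: real
  assumes [measurable]: "g \<in> borel_measurable borel" and "\<And>y. 0 \<le> g y"
    and "a > 0" "r > 0" "0 < t0" "t0 < t1"
    and [measurable]: "A \<in> sets borel" and "A \<subseteq> {t0<..t1}"
    and K: "\<And>t. t \<in> A \<Longrightarrow> K \<le> g (a * t powr (1 / r)) * (a * (1 / r * t powr (1 / r - 1)))"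
  shows "ennreal K * emeasure lborel A
    \<le> (\<integral>\<^sup>+y. ennreal (g y) * indicator {y. 0 < y \<and> (y / a) powr r \<in> A} y \<partial>lborel)"
proof -
  define B where "B = {y. 0 < y \<and> (y / a) powr r \<in> A}"
  define \<phi> where "\<phi> t = a * t powr (1 / r)" for t
  define \<phi>' where "\<phi>' t = a * (1 / r * t powr (1 / r - 1))" for t
  have [measurable]: "B \<in> sets borel" unfolding B_def by measurable
  have deriv: "(\<phi> has_real_derivative \<phi>' t) (at t)" if "t \<in> {t0..t1}" for t
    using that \<open>0 < t0\<close> unfolding \<phi>_def \<phi>'_def by (intro DERIV_cmult has_real_derivative_powr) auto
  have "continuous_on {t0..t1} \<phi>'"
    unfolding \<phi>'_def using \<open>0 < t0\<close> by (intro continuous_intros) auto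
  moreover have "\<phi>' t \<ge> 0" if "t \<in> {t0..t1}" for t
    using that \<open>0 < t0\<close> \<open>a > 0\<close> \<open>r > 0\<close> by (simp add: \<phi>'_def)
  ultimately have subst: "(\<integral>\<^sup>+y. g y * indicator B y * indicator {\<phi> t0..\<phi> t1} y \<partial>lborel) =
      (\<integral>\<^sup>+t. g (\<phi> t) * indicator B (\<phi> t) * \<phi>' t * indicator {t0..t1} t \<partial>lborel)"
    using \<open>t0 < t1\<close> by (intro nn_integral_substitution[OF _ deriv]) (auto simp: set_borel_measurable_def)
  have "(\<integral>\<^sup>+t. ennreal K * indicator A t \<partial>lborel)
      \<le> (\<integral>\<^sup>+t. g (\<phi> t) * indicator B (\<phi> t) * \<phi>' t * indicator {t0..t1} t \<partial>lborel)"
  proof (rule nn_integral_mono)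
    fix t
    show "ennreal K * indicator A t \<le> ennreal (g (\<phi> t) * indicator B (\<phi> t) * \<phi>' t * indicator {t0..t1} t)"
    proof (cases "t \<in> A")
      case True
      then have "t > 0" "t \<in> {t0..t1}" using \<open>A \<subseteq> {t0<..t1}\<close> \<open>0 < t0\<close> by auto
      then have "(\<phi> t / a) powr r = t" using \<open>a > 0\<close> \<open>r > 0\<close> by (simp add: \<phi>_def powr_powr)
      then have "\<phi> t \<in> B" using True \<open>t > 0\<close> \<open>a > 0\<close> by (simp add: B_def \<phi>_def)
      then show ?thesis using True K[of t] \<open>t \<in> {t0..t1}\<close> by (simp add: \<phi>_def \<phi>'_def ennreal_leI)
    qed simp
  qed
  also have "\<dots> = (\<integral>\<^sup>+y. g y * indicator B y * indicator {\<phi> t0..\<phi> t1} y \<partial>lborel)"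
    by (rule subst[symmetric])
  also have "\<dots> \<le> (\<integral>\<^sup>+y. ennreal (g y) * indicator B y \<partial>lborel)"
    using \<open>\<And>y. 0 \<le> g y\<close> by (intro nn_integral_mono) (auto simp: indicator_def)
  finally show ?thesis by (simp add: B_def nn_integral_cmult_indicator)
qed

section \<open>Samples with a Pareto-type tail\<close>

locale iid_pareto_tail = prob_space M for M :: "'a measure" +
  fixes X :: "nat \<Rightarrow> 'a \<Rightarrow> real" and f L :: "real \<Rightarrow> real" and \<alpha> x0 x1 :: real
  assumes X_measurable[measurable]: "\<And>i. X i \<in> borel_measurable M"
    and X_indep: "indep_vars (\<lambda>_. borel) X UNIV"
    and X_identically_distributed: "\<And>i. distr M borel (X i) = distr M borel (X 0)"
    and x0_pos: "x0 > 0" and alpha_pos: "\<alpha> > 0" and L_slowly_varying: "slowly_varying L"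
    and tail_eq: "\<And>x. x > x0 \<Longrightarrow> prob {\<omega> \<in> space M. X 0 \<omega> > x} = x powr (-\<alpha>) * L x"
    and X0_density: "distributed M lborel (X 0) (\<lambda>x. ennreal (f x))"
    and f_nonneg: "\<And>x. f x \<ge> 0"
    and f_antimono: "\<And>x y. x1 \<le> x \<Longrightarrow> x \<le> y \<Longrightarrow> f y \<le> f x"
begin

definition survival :: "real \<Rightarrow> real" where
  "survival x = prob {\<omega> \<in> space M. X 0 \<omega> > x}"

lemma prob_X_eq_prob_X0:
  assumes "S \<in> sets borel"
  shows "prob {\<omega> \<in> space M. X i \<omega> \<in> S} = prob {\<omega> \<in> space M. X 0 \<omega> \<in> S}"
proof -
  have "measure (distr M borel (X i)) S = measure (distr M borel (X 0)) S"
    by (simp add: X_identically_distributed[of i])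
  then show ?thesis using assms by (simp add: measure_distr vimage_def Int_def conj_commute)
qed

lemma f_measurable[measurable]: "f \<in> borel_measurable borel"
proof -
  have "(\<lambda>x. ennreal (f x)) \<in> borel_measurable borel"
    using distributed_borel_measurable[OF X0_density] by simp
  then have "(\<lambda>x. enn2real (ennreal (f x))) \<in> borel_measurable borel" by simp
  then show ?thesis using f_nonneg by simp
qed

lemma emeasure_X0:
  assumes "B \<in> sets borel"
  shows "emeasure M {\<omega> \<in> space M. X 0 \<omega> \<in> B} = (\<integral>\<^sup>+x. ennreal (f x) * indicator B x \<partial>lborel)"
  using distributed_emeasure[OF X0_density, of B] assms by (simp add: vimage_def Int_def conj_commute)

lemma prob_X0_null:
  assumes "B \<in> null_sets lborel"
  shows "prob {\<omega> \<in> space M. X 0 \<omega> \<in> B} = 0"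
proof -
  have [measurable]: "B \<in> sets borel" using assms by auto
  have "emeasure M {\<omega> \<in> space M. X 0 \<omega> \<in> B} = (\<integral>\<^sup>+x. ennreal (f x) * indicator B x \<partial>lborel)"
    by (rule emeasure_X0) simp
  also have "\<dots> = 0" using assms by (rule nn_integral_null_set)
  finally show ?thesis by (simp add: measure_def)
qed

lemma prob_X0_ge: "prob {\<omega> \<in> space M. X 0 \<omega> \<ge> y} = survival y"
proof -
  have "{\<omega> \<in> space M. X 0 \<omega> \<ge> y} = {\<omega> \<in> space M. X 0 \<omega> > y} \<union> {\<omega> \<in> space M. X 0 \<omega> \<in> {y}}"
    by auto
  moreover have "{y} \<in> null_sets lborel" by (auto simp: null_sets_def)
  then have "emeasure M {\<omega> \<in> space M. X 0 \<omega> \<in> {y}} = 0"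
    using prob_X0_null[OF \<open>{y} \<in> null_sets lborel\<close>] by (simp add: emeasure_eq_measure)
  then have "{\<omega> \<in> space M. X 0 \<omega> \<in> {y}} \<in> null_sets M"
    by (intro null_setsI) measurable
  ultimately show ?thesis by (simp add: measure_Un_null_set survival_def)
qed

lemma survival_antimono: "antimono survival"
  unfolding survival_def by (intro antimonoI finite_measure_mono) auto

lemma survival_pos: "survival x > 0"
proof -
  define y where "y = max x x0 + 1"
  have "y > x0" "y \<ge> x" by (simp_all add: y_def)
  then have "survival y > 0"
    using x0_pos L_slowly_varying by (simp add: survival_def tail_eq slowly_varying_def)
  also have "survival y \<le> survival x" using survival_antimono \<open>y \<ge> x\<close> by (rule antimonoD)
  finally show ?thesis .
qed

lemma survival_doubling: "((\<lambda>x. survival (2 * x) / survival x) \<longlongrightarrow> 2 powr (-\<alpha>)) at_top"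
proof -
  have "((\<lambda>x. 2 powr (-\<alpha>) * (L (2 * x) / L x)) \<longlongrightarrow> 2 powr (-\<alpha>) * 1) at_top"
    using L_slowly_varying unfolding slowly_varying_def by (intro tendsto_mult) auto
  moreover have "eventually (\<lambda>x. 2 powr (-\<alpha>) * (L (2 * x) / L x) = survival (2 * x) / survival x) at_top"
    using eventually_gt_at_top[of x0]
  proof eventually_elim
    case (elim x)
    then have "L x > 0" using x0_pos L_slowly_varying by (simp add: slowly_varying_def)
    then show ?case using elim x0_pos by (simp add: survival_def tail_eq powr_mult)
  qed
  ultimately show ?thesis by (simp add: Lim_transform_eventually)
qed

lemma ln_survival_over_ln: "((\<lambda>x. ln (survival x) / ln x) \<longlongrightarrow> -\<alpha>) at_top"
proof -
  have "antimono (\<lambda>x. ln (survival x))"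
    using survival_antimono survival_pos by (auto intro!: antimonoI dest: antimonoD)
  moreover have "((\<lambda>x. ln (survival (2 * x)) - ln (survival x)) \<longlongrightarrow> ln (2 powr (-\<alpha>))) at_top"
  proof -
    have "((\<lambda>x. ln (survival (2 * x) / survival x)) \<longlongrightarrow> ln (2 powr (-\<alpha>))) at_top"
      by (rule tendsto_ln[OF survival_doubling]) simp
    moreover have "(\<lambda>x. ln (survival (2 * x) / survival x)) = (\<lambda>x. ln (survival (2 * x)) - ln (survival x))"
      using survival_pos by (intro ext) (simp add: ln_div less_imp_neq[symmetric])
    ultimately show ?thesis by simp
  qed
  ultimately have "((\<lambda>x. ln (survival x) / ln x) \<longlongrightarrow> ln (2 powr (-\<alpha>)) / ln 2) at_top"
    by (rule antimono_doubling_tendsto_div_ln)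
  then show ?thesis by (simp add: ln_powr)
qed

lemma survival_diff_le:
  assumes "x1 \<le> a" "a \<le> b"
  shows "survival a - survival b \<le> f a * (b - a)"
proof -
  have "{\<omega> \<in> space M. X 0 \<omega> > a} = {\<omega> \<in> space M. X 0 \<omega> \<in> {a<..b}} \<union> {\<omega> \<in> space M. X 0 \<omega> > b}"
    using assms by auto
  then have "survival a = prob {\<omega> \<in> space M. X 0 \<omega> \<in> {a<..b}} + survival b"
    unfolding survival_def by (subst finite_measure_Union[symmetric]) auto
  then have "survival a - survival b = prob {\<omega> \<in> space M. X 0 \<omega> \<in> {a<..b}}" by simp
  also have "ennreal \<dots> = (\<integral>\<^sup>+x. ennreal (f x) * indicator {a<..b} x \<partial>lborel)"
    using emeasure_X0[of "{a<..b}"] by (simp add: emeasure_eq_measure)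
  also have "\<dots> \<le> (\<integral>\<^sup>+x. ennreal (f a) * indicator {a<..b} x \<partial>lborel)"
    using assms f_antimono by (intro nn_integral_mono) (auto simp: indicator_def intro: ennreal_leI)
  also have "\<dots> = ennreal (f a * (b - a))"
    using assms f_nonneg[of a] by (simp add: nn_integral_cmult_indicator ennreal_mult)
  finally show ?thesis using f_nonneg[of a] assms by (simp add: ennreal_le_iff)
qed

text \<open>On \<open>[x, 2x]\<close> the density is at most \<open>f x\<close>, while the tail loses there at least the
  fraction \<open>1 - 2 powr (-\<alpha>/2)\<close> of its mass, since \<open>survival (2 * x) / survival x \<longrightarrow> 2 powr (-\<alpha>)\<close>.\<close>

definition density_minorant :: "real \<Rightarrow> real" where
  "density_minorant x = (1 - 2 powr (-\<alpha> / 2)) * survival x / x"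

lemma density_minorant_pos: "x > 0 \<Longrightarrow> density_minorant x > 0"
  using survival_pos[of x] alpha_pos by (simp add: density_minorant_def powr_less_one)

lemma eventually_density_minorant_le: "eventually (\<lambda>x. density_minorant x \<le> f x) at_top"
proof -
  have "2 powr (-\<alpha>) < 2 powr (-\<alpha> / 2)" using alpha_pos by simp
  then have "eventually (\<lambda>x. survival (2 * x) / survival x < 2 powr (-\<alpha> / 2)) at_top"
    by (rule order_tendstoD(2)[OF survival_doubling])
  then show ?thesis using eventually_gt_at_top[of "max x1 0"]
  proof eventually_elim
    case (elim x)
    then have "(1 - 2 powr (-\<alpha> / 2)) * survival x \<le> survival x - survival (2 * x)"
      using survival_pos[of x] by (simp add: divide_less_eq algebra_simps)
    also have "\<dots> \<le> f x * x" using survival_diff_le[of x "2 * x"] elim by simp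
    finally show ?case using elim by (simp add: density_minorant_def divide_le_eq)
  qed
qed

lemma ln_density_minorant_over_ln: "((\<lambda>x. ln (density_minorant x) / ln x) \<longlongrightarrow> -\<alpha> - 1) at_top"
proof -
  have "((\<lambda>x. ln (1 - 2 powr (-\<alpha> / 2)) / ln x) \<longlongrightarrow> 0) at_top" by real_asymp
  then have "((\<lambda>x. ln (1 - 2 powr (-\<alpha> / 2)) / ln x + ln (survival x) / ln x - 1) \<longlongrightarrow> 0 + (-\<alpha>) - 1) at_top"
    by (intro tendsto_intros ln_survival_over_ln)
  moreover have "eventually (\<lambda>x. ln (1 - 2 powr (-\<alpha> / 2)) / ln x + ln (survival x) / ln x - 1
      = ln (density_minorant x) / ln x) at_top"
    using eventually_gt_at_top[of 1]
  proof eventually_elim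
    case (elim x)
    have "ln (density_minorant x) = ln (1 - 2 powr (-\<alpha> / 2)) + ln (survival x) - ln x"
      using elim survival_pos[of x] alpha_pos by (simp add: density_minorant_def ln_mult ln_div powr_less_one)
    then show ?case using elim by (simp add: field_simps)
  qed
  ultimately show ?thesis by (simp add: Lim_transform_eventually)
qed

definition scaling :: "nat \<Rightarrow> real" where
  "scaling n = left_inverse (\<lambda>x. prob {\<omega> \<in> space M. X 0 \<omega> \<le> x}) (1 - 1 / real n)"

lemma prob_X0_le: "prob {\<omega> \<in> space M. X 0 \<omega> \<le> x} = 1 - survival x"
proof -
  have "{\<omega> \<in> space M. X 0 \<omega> \<le> x} = space M - {\<omega> \<in> space M. X 0 \<omega> > x}" by auto
  then show ?thesis by (simp add: survival_def prob_compl)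
qed

lemma survival_scaling:
  assumes "n \<ge> 2"
  shows "survival (scaling n) \<le> 1 / real n" and "x < scaling n \<Longrightarrow> 1 / real n < survival x"
proof -
  interpret D: real_distribution "distr M borel (X 0)" by (rule real_distribution_distr) simp
  have cdf: "(\<lambda>x. prob {\<omega> \<in> space M. X 0 \<omega> \<le> x}) = cdf (distr M borel (X 0))"
    by (auto simp: cdf_def measure_distr vimage_def Int_def conj_commute)
  have "0 < 1 - 1 / real n" "1 - 1 / real n < 1" using assms by (auto simp: field_simps)
  note quantile = D.cdf_left_inverse[OF this, folded cdf, folded scaling_def]
  show "survival (scaling n) \<le> 1 / real n" using quantile(1) unfolding prob_X0_le by simp
  show "1 / real n < survival x" if "x < scaling n"
    using quantile(2)[OF that] unfolding prob_X0_le by simp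
qed

lemma scaling_tendsto: "filterlim scaling at_top sequentially"
  unfolding filterlim_at_top
proof
  fix K :: real
  obtain N :: nat where N: "max 2 (1 / survival K) < real N" using reals_Archimedean2 by blast
  show "eventually (\<lambda>n. K \<le> scaling n) sequentially"
    using eventually_ge_at_top[of N]
  proof eventually_elim
    case (elim n)
    then have "n \<ge> 2" "1 / survival K < real n" using N by auto
    then have "1 / real n < survival K"
      using survival_pos[of K] by (simp add: divide_less_eq mult.commute)
    show ?case
    proof (rule ccontr)
      assume "\<not> K \<le> scaling n"
      then have "survival K \<le> survival (scaling n)"
        using antimonoD[OF survival_antimono, of "scaling n" K] by simp
      then show False
        using survival_scaling(1)[OF \<open>n \<ge> 2\<close>] \<open>1 / real n < survival K\<close> by simp
    qed
  qed
qed

lemma eventually_scaling_gt_1: "eventually (\<lambda>n. scaling n > 1) sequentially"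
  using filterlim_at_top_dense[THEN iffD1, OF scaling_tendsto] by blast

lemma ln_scaling_over_ln: "((\<lambda>n. ln (scaling n) / ln (real n)) \<longlongrightarrow> 1 / \<alpha>) sequentially"
proof -
  have lim: "((\<lambda>x. - ln (survival x) / ln x) \<longlongrightarrow> \<alpha>) at_top"
    using tendsto_minus[OF ln_survival_over_ln] by simp
  have "((\<lambda>x. (- ln (survival (x / 2)) / ln (x / 2)) * (ln (x / 2) / ln x)) \<longlongrightarrow> \<alpha> * 1) at_top"
    by (intro tendsto_mult filterlim_compose[OF lim]) real_asymp+
  moreover have "eventually (\<lambda>x. (- ln (survival (x / 2)) / ln (x / 2)) * (ln (x / 2) / ln x)
      = - ln (survival (x / 2)) / ln x) at_top"
    using eventually_gt_at_top[of 2] by eventually_elim simp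
  ultimately have "((\<lambda>x. - ln (survival (x / 2)) / ln x) \<longlongrightarrow> \<alpha>) at_top"
    by (simp add: Lim_transform_eventually)
  then have lower: "((\<lambda>n. - ln (survival (scaling n / 2)) / ln (scaling n)) \<longlongrightarrow> \<alpha>) sequentially"
    using filterlim_compose[OF _ scaling_tendsto] by auto
  have upper: "((\<lambda>n. - ln (survival (scaling n)) / ln (scaling n)) \<longlongrightarrow> \<alpha>) sequentially"
    using filterlim_compose[OF lim scaling_tendsto] by auto
  have ev: "eventually (\<lambda>n. n \<ge> 2 \<and> scaling n > 1) sequentially"
    using eventually_ge_at_top[of 2] eventually_scaling_gt_1 by eventually_elim simp
  have "eventually (\<lambda>n. - ln (survival (scaling n / 2)) / ln (scaling n) \<le> ln (real n) / ln (scaling n)) sequentially"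
    using ev
  proof eventually_elim
    case (elim n)
    then have "ln (1 / real n) < ln (survival (scaling n / 2))"
      using survival_scaling(2)[of n "scaling n / 2"] survival_pos by (subst ln_less_cancel_iff) auto
    then show ?case using elim by (intro divide_right_mono) (auto simp: ln_div)
  qed
  moreover have "eventually (\<lambda>n. ln (real n) / ln (scaling n) \<le> - ln (survival (scaling n)) / ln (scaling n)) sequentially"
    using ev
  proof eventually_elim
    case (elim n)
    then have "ln (survival (scaling n)) \<le> ln (1 / real n)"
      using survival_scaling(1)[of n] survival_pos by (subst ln_le_cancel_iff) auto
    then show ?case using elim by (intro divide_right_mono) (auto simp: ln_div)
  qed
  ultimately have "((\<lambda>n. ln (real n) / ln (scaling n)) \<longlongrightarrow> \<alpha>) sequentially"
    using lower upper by (rule tendsto_sandwich)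
  then have "((\<lambda>n. inverse (ln (real n) / ln (scaling n))) \<longlongrightarrow> inverse \<alpha>) sequentially"
    using alpha_pos by (intro tendsto_inverse) auto
  then show ?thesis by (simp add: inverse_eq_divide)
qed

lemma scaling_powr_tendsto:
  assumes "c \<ge> 0"
  shows "filterlim (\<lambda>n. scaling n * real n powr c) at_top sequentially"
proof (rule filterlim_at_top_mono[OF scaling_tendsto])
  show "eventually (\<lambda>n. scaling n \<le> scaling n * real n powr c) sequentially"
    using eventually_scaling_gt_1 eventually_ge_at_top[of 1]
    by eventually_elim (use assms in \<open>simp add: ge_one_powr_ge_zero\<close>)
qed

lemma ln_scaling_powr_over_ln:
  "((\<lambda>n. ln (scaling n * real n powr c) / ln (real n)) \<longlongrightarrow> 1 / \<alpha> + c) sequentially"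
proof -
  have "((\<lambda>n. ln (scaling n) / ln (real n) + c) \<longlongrightarrow> 1 / \<alpha> + c) sequentially"
    by (intro tendsto_intros ln_scaling_over_ln)
  moreover have "eventually (\<lambda>n. ln (scaling n) / ln (real n) + c = ln (scaling n * real n powr c) / ln (real n)) sequentially"
    using eventually_scaling_gt_1 eventually_ge_at_top[of 2]
    by eventually_elim (simp add: ln_mult ln_powr field_simps)
  ultimately show ?thesis by (rule Lim_transform_eventually)
qed

lemma sample_max_measurable[measurable]: "sample_max X n \<in> borel_measurable M"
  unfolding sample_max_def by (rule borel_measurable_Max) auto

lemma sample_max_attained:
  assumes "n \<ge> 1"
  shows "\<exists>i<n. sample_max X n \<omega> = X i \<omega>"
proof -
  have "(\<lambda>i. X i \<omega>) ` {..<n} \<noteq> {}" using assms by (auto simp: lessThan_empty_iff)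
  from Max_in[OF _ this] show ?thesis unfolding sample_max_def by auto
qed

lemma sample_max_ge: "i < n \<Longrightarrow> X i \<omega> \<le> sample_max X n \<omega>"
  unfolding sample_max_def by (rule Max_ge) auto

lemma prob_sample_max_le:
  assumes S[measurable]: "S \<in> sets borel" and "n \<ge> 1"
  shows "prob {\<omega> \<in> space M. sample_max X n \<omega> \<in> S} \<le> real n * prob {\<omega> \<in> space M. X 0 \<omega> \<in> S}"
proof -
  have "{\<omega> \<in> space M. sample_max X n \<omega> \<in> S} \<subseteq> (\<Union>i<n. {\<omega> \<in> space M. X i \<omega> \<in> S})"
  proof
    fix \<omega> assume "\<omega> \<in> {\<omega> \<in> space M. sample_max X n \<omega> \<in> S}"
    moreover obtain i where "i < n" "sample_max X n \<omega> = X i \<omega>"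
      using sample_max_attained[OF \<open>n \<ge> 1\<close>] by blast
    ultimately show "\<omega> \<in> (\<Union>i<n. {\<omega> \<in> space M. X i \<omega> \<in> S})" by auto
  qed
  then have "prob {\<omega> \<in> space M. sample_max X n \<omega> \<in> S} \<le> prob (\<Union>i<n. {\<omega> \<in> space M. X i \<omega> \<in> S})"
    by (rule finite_measure_mono) measurable
  also have "\<dots> \<le> (\<Sum>i<n. prob {\<omega> \<in> space M. X i \<omega> \<in> S})"
    by (rule finite_measure_subadditive_finite) (auto intro: measurable_sets_Collect)
  also have "\<dots> = (\<Sum>i<n. prob {\<omega> \<in> space M. X 0 \<omega> \<in> S})"
    by (rule sum.cong[OF refl prob_X_eq_prob_X0[OF S]])
  finally show ?thesis by simp
qed

lemma prob_X_in_and_others_le: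
  assumes [measurable]: "B \<in> sets borel" and "i < n"
  shows "prob {\<omega> \<in> space M. X i \<omega> \<in> B \<and> (\<forall>j<n. j \<noteq> i \<longrightarrow> X j \<omega> \<le> b)}
    = prob {\<omega> \<in> space M. X 0 \<omega> \<in> B} * prob {\<omega> \<in> space M. X 0 \<omega> \<le> b} ^ (n - 1)"
proof -
  define C where "C j = (if j = i then B else {..b})" for j
  have [measurable]: "C j \<in> sets borel" for j by (simp add: C_def)
  have "{\<omega> \<in> space M. X i \<omega> \<in> B \<and> (\<forall>j<n. j \<noteq> i \<longrightarrow> X j \<omega> \<le> b)} = (\<Inter>j<n. X j -` C j \<inter> space M)"
    using \<open>i < n\<close> by (auto simp: C_def)
  also have "prob \<dots> = (\<Prod>j<n. prob (X j -` C j \<inter> space M))"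
    by (rule indep_varsD[OF X_indep]) (use \<open>i < n\<close> in auto)
  also have "\<dots> = (\<Prod>j<n. prob {\<omega> \<in> space M. X 0 \<omega> \<in> C j})"
  proof (rule prod.cong[OF refl])
    fix j
    have "X j -` C j \<inter> space M = {\<omega> \<in> space M. X j \<omega> \<in> C j}" by auto
    then show "prob (X j -` C j \<inter> space M) = prob {\<omega> \<in> space M. X 0 \<omega> \<in> C j}"
      using prob_X_eq_prob_X0[of "C j" j] by simp
  qed
  also have "\<dots> = prob {\<omega> \<in> space M. X 0 \<omega> \<in> C i} * (\<Prod>j\<in>{..<n} - {i}. prob {\<omega> \<in> space M. X 0 \<omega> \<in> C j})"
    using \<open>i < n\<close> by (intro prod.remove) auto
  also have "(\<Prod>j\<in>{..<n} - {i}. prob {\<omega> \<in> space M. X 0 \<omega> \<in> C j}) = prob {\<omega> \<in> space M. X 0 \<omega> \<le> b} ^ (n - 1)"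
    using \<open>i < n\<close> by (simp add: C_def card_Diff_singleton)
  finally show ?thesis by (simp add: C_def)
qed

lemma prob_sample_max_ge:
  assumes [measurable]: "B \<in> sets borel" and "B \<subseteq> {b<..}" and "n \<ge> 1"
  shows "real n * (prob {\<omega> \<in> space M. X 0 \<omega> \<in> B} * prob {\<omega> \<in> space M. X 0 \<omega> \<le> b} ^ (n - 1))
    \<le> prob {\<omega> \<in> space M. sample_max X n \<omega> \<in> B}"
proof -
  define E where "E i = {\<omega> \<in> space M. X i \<omega> \<in> B \<and> (\<forall>j<n. j \<noteq> i \<longrightarrow> X j \<omega> \<le> b)}" for i
  have [measurable]: "E i \<in> sets M" for i unfolding E_def by measurable
  have "disjoint_family_on E {..<n}"
    using \<open>B \<subseteq> {b<..}\<close> by (fastforce simp: disjoint_family_on_def E_def)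
  have "E i \<subseteq> {\<omega> \<in> space M. sample_max X n \<omega> \<in> B}" if "i < n" for i
  proof
    fix \<omega> assume "\<omega> \<in> E i"
    then have \<omega>: "\<omega> \<in> space M" "X i \<omega> \<in> B" "\<And>j. j < n \<Longrightarrow> j \<noteq> i \<Longrightarrow> X j \<omega> \<le> b"
      by (auto simp: E_def)
    obtain j where "j < n" "sample_max X n \<omega> = X j \<omega>" using sample_max_attained \<open>n \<ge> 1\<close> by blast
    moreover have "X i \<omega> \<le> sample_max X n \<omega>" using \<open>i < n\<close> by (rule sample_max_ge)
    moreover have "b < X i \<omega>" using \<omega>(2) \<open>B \<subseteq> {b<..}\<close> by auto
    ultimately have "sample_max X n \<omega> = X i \<omega>" using \<omega>(3) by force
    then show "\<omega> \<in> {\<omega> \<in> space M. sample_max X n \<omega> \<in> B}" using \<omega> by simp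
  qed
  then have "prob (\<Union>i<n. E i) \<le> prob {\<omega> \<in> space M. sample_max X n \<omega> \<in> B}"
    by (intro finite_measure_mono) auto
  moreover have "prob (\<Union>i<n. E i) = (\<Sum>i<n. prob (E i))"
    using \<open>disjoint_family_on E {..<n}\<close> by (intro finite_measure_finite_Union) auto
  moreover have "prob (E i) = prob {\<omega> \<in> space M. X 0 \<omega> \<in> B} * prob {\<omega> \<in> space M. X 0 \<omega> \<le> b} ^ (n - 1)"
    if "i < n" for i
    unfolding E_def using that by (rule prob_X_in_and_others_le[OF \<open>B \<in> sets borel\<close>])
  ultimately show ?thesis by simp
qed

definition Z :: "nat \<Rightarrow> 'a \<Rightarrow> real" where
  "Z n \<omega> = (if sample_max X n \<omega> > 0 then (sample_max X n \<omega> / scaling n) powr (\<alpha> / ln (real n)) else 0)"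

lemma Z_measurable[measurable]: "Z n \<in> borel_measurable M"
  unfolding Z_def by measurable

lemma Z_in_iff:
  "0 \<notin> S \<Longrightarrow> Z n \<omega> \<in> S \<longleftrightarrow> sample_max X n \<omega> \<in> {y. 0 < y \<and> (y / scaling n) powr (\<alpha> / ln (real n)) \<in> S}"
  unfolding Z_def by auto

lemma prob_Z_ge_exp_le:
  assumes "n \<ge> 2" "scaling n > 0" "s > 0"
  shows "prob {\<omega> \<in> space M. exp s \<le> Z n \<omega>} \<le> real n * survival (scaling n * real n powr (s / \<alpha>))"
proof -
  define r where "r = \<alpha> / ln (real n)"
  have "r > 0" using assms alpha_pos by (simp add: r_def)
  have "{y. 0 < y \<and> (y / scaling n) powr r \<in> {exp s..}} \<subseteq> {scaling n * real n powr (s / \<alpha>)..}"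
  proof
    fix y assume "y \<in> {y. 0 < y \<and> (y / scaling n) powr r \<in> {exp s..}}"
    then have "0 < y" "exp s \<le> (y / scaling n) powr r" by auto
    then have "s \<le> r * ln (y / scaling n)" using assms by (simp add: powr_def)
    then have "s / r \<le> ln (y / scaling n)" using \<open>r > 0\<close> by (simp add: divide_le_eq mult.commute)
    then have "exp (s / r) \<le> exp (ln (y / scaling n))" by simp
    also have "\<dots> = y / scaling n" using \<open>0 < y\<close> assms by simp
    finally have "exp (s / r) \<le> y / scaling n" .
    moreover have "exp (s / r) = real n powr (s / \<alpha>)" using assms by (simp add: r_def powr_def)
    ultimately show "y \<in> {scaling n * real n powr (s / \<alpha>)..}"
      using assms by (simp add: le_divide_eq mult.commute)
  qed
  then have "{\<omega> \<in> space M. exp s \<le> Z n \<omega>}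
      \<subseteq> {\<omega> \<in> space M. sample_max X n \<omega> \<in> {scaling n * real n powr (s / \<alpha>)..}}"
    using Z_in_iff[of "{exp s..}" n] by (force simp: r_def)
  then have "prob {\<omega> \<in> space M. exp s \<le> Z n \<omega>}
      \<le> prob {\<omega> \<in> space M. sample_max X n \<omega> \<in> {scaling n * real n powr (s / \<alpha>)..}}"
    by (rule finite_measure_mono) measurable
  also have "\<dots> \<le> real n * prob {\<omega> \<in> space M. X 0 \<omega> \<in> {scaling n * real n powr (s / \<alpha>)..}}"
    using assms by (intro prob_sample_max_le) auto
  finally show ?thesis using prob_X0_ge by simp
qed

lemma ln_upper_tail_bound_over_ln:
  assumes "s > 0"
  shows "((\<lambda>n. ln (real n * survival (scaling n * real n powr (s / \<alpha>))) / ln (real n)) \<longlongrightarrow> -s) sequentially"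
proof -
  define y where "y n = scaling n * real n powr (s / \<alpha>)" for n
  have y: "filterlim y at_top sequentially"
    unfolding y_def using assms alpha_pos by (intro scaling_powr_tendsto) simp
  have "((\<lambda>n. 1 + (ln (survival (y n)) / ln (y n)) * (ln (y n) / ln (real n)))
      \<longlongrightarrow> 1 + (-\<alpha>) * (1 / \<alpha> + s / \<alpha>)) sequentially"
    unfolding y_def using filterlim_compose[OF ln_survival_over_ln y]
    by (intro tendsto_intros ln_scaling_powr_over_ln) (auto simp: o_def y_def)
  moreover have "1 + (-\<alpha>) * (1 / \<alpha> + s / \<alpha>) = -s" using alpha_pos by (simp add: field_simps)
  moreover have "eventually (\<lambda>n. 1 + (ln (survival (y n)) / ln (y n)) * (ln (y n) / ln (real n))
      = ln (real n * survival (y n)) / ln (real n)) sequentially"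
    using eventually_ge_at_top[of 2] filterlim_at_top_dense[THEN iffD1, OF y, rule_format, of 1]
  proof eventually_elim
    case (elim n)
    then have "ln (y n) > 0" "ln (real n) > 0" by simp_all
    then show ?case using elim survival_pos[of "y n"] by (simp add: ln_mult field_simps)
  qed
  ultimately show ?thesis by (simp add: y_def Lim_transform_eventually)
qed

lemma prob_Z_null:
  assumes "N \<in> null_sets lborel" "N \<subseteq> {1..}" "n \<ge> 2" "scaling n > 0"
  shows "prob {\<omega> \<in> space M. Z n \<omega> \<in> N} = 0"
proof -
  define B where "B = {y. 0 < y \<and> (y / scaling n) powr (\<alpha> / ln (real n)) \<in> N}"
  have "B \<in> null_sets lborel"
    unfolding B_def using assms alpha_pos by (intro null_sets_powr_preimage) auto
  then have [measurable]: "B \<in> sets borel" by auto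
  have "{\<omega> \<in> space M. Z n \<omega> \<in> N} = {\<omega> \<in> space M. sample_max X n \<omega> \<in> B}"
  proof -
    have "0 \<notin> N" using \<open>N \<subseteq> {1..}\<close> by auto
    then show ?thesis using Z_in_iff[of N n] by (auto simp: B_def)
  qed
  then have "prob {\<omega> \<in> space M. Z n \<omega> \<in> N} \<le> real n * prob {\<omega> \<in> space M. X 0 \<omega> \<in> B}"
    using assms prob_sample_max_le[of B n] by simp
  then show ?thesis using prob_X0_null[OF \<open>B \<in> null_sets lborel\<close>] measure_nonneg[of M] by (simp add: order_antisym)
qed

lemma prob_Z_in_le:
  assumes [measurable]: "A \<in> sets borel" and "A \<subseteq> {1..}" and "emeasure lborel {x \<in> A. ln x < s} = 0"
    and "s > 0" "n \<ge> 2" "scaling n > 0"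
  shows "prob {\<omega> \<in> space M. Z n \<omega> \<in> A} \<le> real n * survival (scaling n * real n powr (s / \<alpha>))"
proof -
  define N where "N = {x \<in> A. ln x < s}"
  have [measurable]: "N \<in> sets borel" unfolding N_def by measurable
  then have "N \<in> null_sets lborel" using assms(3) by (auto simp: N_def)
  have "{\<omega> \<in> space M. Z n \<omega> \<in> A} \<subseteq> {\<omega> \<in> space M. Z n \<omega> \<in> N} \<union> {\<omega> \<in> space M. exp s \<le> Z n \<omega>}"
  proof
    fix \<omega> assume \<omega>: "\<omega> \<in> {\<omega> \<in> space M. Z n \<omega> \<in> A}"
    show "\<omega> \<in> {\<omega> \<in> space M. Z n \<omega> \<in> N} \<union> {\<omega> \<in> space M. exp s \<le> Z n \<omega>}"
    proof (cases "exp s \<le> Z n \<omega>")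
      case False
      moreover have "Z n \<omega> \<ge> 1" using \<omega> \<open>A \<subseteq> {1..}\<close> by auto
      ultimately have "ln (Z n \<omega>) < ln (exp s)" by (subst ln_less_cancel_iff) auto
      then show ?thesis using \<omega> by (simp add: N_def)
    qed (use \<omega> in simp)
  qed
  then have "prob {\<omega> \<in> space M. Z n \<omega> \<in> A}
      \<le> prob ({\<omega> \<in> space M. Z n \<omega> \<in> N} \<union> {\<omega> \<in> space M. exp s \<le> Z n \<omega>})"
    by (rule finite_measure_mono) measurable
  also have "\<dots> \<le> prob {\<omega> \<in> space M. Z n \<omega> \<in> N} + prob {\<omega> \<in> space M. exp s \<le> Z n \<omega>}"
    by (rule measure_Un_le) measurable
  also have "prob {\<omega> \<in> space M. Z n \<omega> \<in> N} = 0"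
    using assms by (intro prob_Z_null \<open>N \<in> null_sets lborel\<close>) (auto simp: N_def)
  also have "prob {\<omega> \<in> space M. exp s \<le> Z n \<omega>} \<le> real n * survival (scaling n * real n powr (s / \<alpha>))"
    using assms by (intro prob_Z_ge_exp_le) auto
  finally show ?thesis by simp
qed

lemma prob_X0_powr_preimage_ge:
  assumes "a > 0" "0 < r" "r \<le> 1" "0 < t0" "t0 < t1"
    and A[measurable]: "A \<in> sets borel" "A \<subseteq> {t0<..t1}" and "x1 \<le> a * t0 powr (1 / r)"
  shows "f (a * t1 powr (1 / r)) * (a * t0 powr (1 / r) / t1) * measure lborel A
    \<le> prob {\<omega> \<in> space M. X 0 \<omega> \<in> {y. 0 < y \<and> (y / a) powr r \<in> A}}"
proof -
  define K where "K = f (a * t1 powr (1 / r)) * (a * t0 powr (1 / r) / t1)"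
  have "K \<ge> 0" using f_nonneg assms by (simp add: K_def)
  have "K \<le> f (a * t powr (1 / r)) * (a * (1 / r * t powr (1 / r - 1)))" if "t \<in> A" for t
  proof -
    have t: "t0 < t" "t \<le> t1" using that A by auto
    have "a * t0 powr (1 / r) \<le> a * t powr (1 / r)" "a * t powr (1 / r) \<le> a * t1 powr (1 / r)"
      using t assms by (simp_all add: powr_mono2)
    then have "f (a * t1 powr (1 / r)) \<le> f (a * t powr (1 / r))"
      using f_antimono \<open>x1 \<le> a * t0 powr (1 / r)\<close> by force
    moreover have "a * t0 powr (1 / r) / t1 \<le> a * (1 / r * t powr (1 / r - 1))"
    proof -
      have "a * t0 powr (1 / r) / t1 \<le> a * t powr (1 / r) / t"
        using t assms \<open>a * t0 powr (1 / r) \<le> a * t powr (1 / r)\<close> by (intro frac_le) auto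
      also have "\<dots> = a * t powr (1 / r - 1)"
        using t assms by (simp add: powr_diff)
      also have "\<dots> \<le> a * (1 / r * t powr (1 / r - 1))"
      proof -
        have "1 \<le> 1 / r" using assms by (simp add: le_divide_eq)
        then have "t powr (1 / r - 1) \<le> 1 / r * t powr (1 / r - 1)"
          using mult_right_mono[of 1 "1 / r" "t powr (1 / r - 1)"] by simp
        then show ?thesis using \<open>a > 0\<close> by (rule mult_left_mono[OF _ less_imp_le])
      qed
      finally show ?thesis .
    qed
    ultimately show ?thesis
      using f_nonneg \<open>K \<ge> 0\<close> assms unfolding K_def by (intro mult_mono) auto
  qed
  then have "ennreal K * emeasure lborel A
      \<le> (\<integral>\<^sup>+y. ennreal (f y) * indicator {y. 0 < y \<and> (y / a) powr r \<in> A} y \<partial>lborel)"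
    using assms f_nonneg by (intro nn_integral_powr_preimage_ge) auto
  also have "\<dots> = emeasure M {\<omega> \<in> space M. X 0 \<omega> \<in> {y. 0 < y \<and> (y / a) powr r \<in> A}}"
    by (rule emeasure_X0[symmetric]) measurable
  finally have "ennreal K * emeasure lborel A \<le> ennreal (prob {\<omega> \<in> space M. X 0 \<omega> \<in> {y. 0 < y \<and> (y / a) powr r \<in> A}})"
    by (simp add: emeasure_eq_measure)
  moreover have "emeasure lborel A = ennreal (measure lborel A)"
  proof (rule emeasure_eq_ennreal_measure)
    have "emeasure lborel A \<le> emeasure lborel {t0..t1}" using A by (intro emeasure_mono) auto
    then show "emeasure lborel A \<noteq> top" using \<open>t0 < t1\<close> by (auto simp: top_unique)
  qed
  ultimately show ?thesis using \<open>K \<ge> 0\<close> by (simp add: K_def ennreal_mult[symmetric] ennreal_le_iff)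
qed

lemma prob_Z_in_ge:
  assumes "n \<ge> 2" "scaling n > 0" "\<alpha> \<le> ln (real n)" "1 \<le> t0" "t0 < t1"
    and A[measurable]: "A \<in> sets borel" "A \<subseteq> {t0<..t1}"
    and "x1 \<le> scaling n * t0 powr (ln (real n) / \<alpha>)"
  shows "real n * exp (-1) * (f (scaling n * t1 powr (ln (real n) / \<alpha>))
      * (scaling n * t0 powr (ln (real n) / \<alpha>) / t1) * measure lborel A)
    \<le> prob {\<omega> \<in> space M. Z n \<omega> \<in> A}"
proof -
  define r where "r = \<alpha> / ln (real n)"
  have r: "0 < r" "r \<le> 1" using assms alpha_pos by (auto simp: r_def)
  have r_inverse: "1 / r = ln (real n) / \<alpha>" by (simp add: r_def)
  define b0 where "b0 = scaling n * t0 powr (1 / r)"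
  define B where "B = {y. 0 < y \<and> (y / scaling n) powr r \<in> A}"
  have [measurable]: "B \<in> sets borel" unfolding B_def by measurable
  have "B \<subseteq> {b0<..}"
    unfolding B_def b0_def using assms r by (intro powr_preimage_subset) auto
  have "scaling n \<le> b0"
    using assms r by (simp add: b0_def ge_one_powr_ge_zero)
  then have "1 - 1 / real n \<le> prob {\<omega> \<in> space M. X 0 \<omega> \<le> b0}"
    using survival_scaling(1)[OF \<open>n \<ge> 2\<close>] antimonoD[OF survival_antimono] by (force simp: prob_X0_le)
  then have "(1 - 1 / real n) ^ (n - 1) \<le> prob {\<omega> \<in> space M. X 0 \<omega> \<le> b0} ^ (n - 1)"
    using \<open>n \<ge> 2\<close> by (intro power_mono) auto
  then have "exp (-1) \<le> prob {\<omega> \<in> space M. X 0 \<omega> \<le> b0} ^ (n - 1)"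
    using power_one_minus_inverse_ge_exp[OF \<open>n \<ge> 2\<close>] by linarith
  moreover have "f (scaling n * t1 powr (1 / r)) * (b0 / t1) * measure lborel A
      \<le> prob {\<omega> \<in> space M. X 0 \<omega> \<in> B}"
    unfolding b0_def B_def using assms r by (intro prob_X0_powr_preimage_ge) (auto simp: r_inverse)
  ultimately have "real n * (f (scaling n * t1 powr (1 / r)) * (b0 / t1) * measure lborel A * exp (-1))
      \<le> real n * (prob {\<omega> \<in> space M. X 0 \<omega> \<in> B} * prob {\<omega> \<in> space M. X 0 \<omega> \<le> b0} ^ (n - 1))"
    by (intro mult_left_mono mult_mono) auto
  also have "\<dots> \<le> prob {\<omega> \<in> space M. sample_max X n \<omega> \<in> B}"
    using \<open>B \<subseteq> {b0<..}\<close> assms by (intro prob_sample_max_ge) auto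
  also have "\<dots> = prob {\<omega> \<in> space M. Z n \<omega> \<in> A}"
  proof -
    have "0 \<notin> A" using A \<open>1 \<le> t0\<close> by auto
    then show ?thesis using Z_in_iff[of A n] by (simp add: B_def r_def)
  qed
  finally show ?thesis by (simp add: r_inverse b0_def mult_ac)
qed

text \<open>A lower bound for \<open>prob {Z n \<in> A}\<close> when \<open>A \<subseteq> {exp l0<..exp l1}\<close> has Lebesgue measure
  \<open>m\<close>, from the event that exactly one of the \<open>n\<close> sample points falls into the preimage of \<open>A\<close>
  under \<open>y \<mapsto> (y / scaling n) powr (\<alpha> / ln n)\<close> and all others stay below it.\<close>

definition window_lower_bound :: "real \<Rightarrow> real \<Rightarrow> real \<Rightarrow> nat \<Rightarrow> real" where
  "window_lower_bound l0 l1 m n = real n * exp (-1) *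
     (density_minorant (scaling n * real n powr (l1 / \<alpha>)) * (scaling n * real n powr (l0 / \<alpha>) / exp l1) * m)"

lemma eventually_window_lower_bound:
  assumes "0 \<le> l0" "l0 < l1" and A[measurable]: "A \<in> sets borel" "A \<subseteq> {exp l0<..exp l1}"
    and "measure lborel A > 0"
  shows "eventually (\<lambda>n. 0 < window_lower_bound l0 l1 (measure lborel A) n \<and>
    window_lower_bound l0 l1 (measure lborel A) n \<le> prob {\<omega> \<in> space M. Z n \<omega> \<in> A}) sequentially"
proof -
  define b0 where "b0 n = scaling n * real n powr (l0 / \<alpha>)" for n
  define b1 where "b1 n = scaling n * real n powr (l1 / \<alpha>)" for n
  have "filterlim b0 at_top sequentially" "filterlim b1 at_top sequentially"
    unfolding b0_def b1_def using assms alpha_pos by (auto intro!: scaling_powr_tendsto)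
  then have "eventually (\<lambda>n. x1 \<le> b0 n) sequentially"
    and "eventually (\<lambda>n. density_minorant (b1 n) \<le> f (b1 n)) sequentially"
    by (simp_all add: filterlim_at_top eventually_compose_filterlim[OF eventually_density_minorant_le])
  moreover have "eventually (\<lambda>n. \<alpha> \<le> ln (real n)) sequentially"
    using filterlim_compose[OF ln_at_top filterlim_real_sequentially] by (simp add: filterlim_at_top)
  ultimately show ?thesis
    using eventually_ge_at_top[of 2] eventually_scaling_gt_1
  proof eventually_elim
    case (elim n)
    have exp_powr: "exp l powr (ln (real n) / \<alpha>) = real n powr (l / \<alpha>)" for l
      using elim by (simp add: powr_def)
    have "0 < b0 n" "0 < b1 n" using elim by (simp_all add: b0_def b1_def)
    have "window_lower_bound l0 l1 (measure lborel A) n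
        \<le> real n * exp (-1) * (f (b1 n) * (b0 n / exp l1) * measure lborel A)"
      unfolding window_lower_bound_def b0_def[symmetric] b1_def[symmetric]
      using elim \<open>0 < b0 n\<close> by (intro mult_left_mono mult_right_mono) auto
    also have "\<dots> \<le> prob {\<omega> \<in> space M. Z n \<omega> \<in> A}"
      using prob_Z_in_ge[of n "exp l0" "exp l1" A] elim assms
      by (simp add: exp_powr b0_def b1_def)
    finally show ?case
      using elim \<open>0 < b0 n\<close> \<open>0 < b1 n\<close> density_minorant_pos[of "b1 n"] assms
      by (simp add: window_lower_bound_def b0_def b1_def)
  qed
qed

lemma ln_window_lower_bound_over_ln:
  assumes "0 \<le> l1" "m > 0"
  shows "((\<lambda>n. ln (window_lower_bound l0 l1 m n) / ln (real n)) \<longlongrightarrow> -l1 - (l1 - l0) / \<alpha>) sequentially"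
proof -
  define b0 where "b0 n = scaling n * real n powr (l0 / \<alpha>)" for n
  define b1 where "b1 n = scaling n * real n powr (l1 / \<alpha>)" for n
  have b1: "filterlim b1 at_top sequentially"
    unfolding b1_def using assms alpha_pos by (intro scaling_powr_tendsto) simp
  have "((\<lambda>x::real. (ln m - 1 - l1) / ln x) \<longlongrightarrow> 0) at_top" by real_asymp
  from filterlim_compose[OF this filterlim_real_sequentially]
  have "((\<lambda>n. 1 + (ln m - 1 - l1) / ln (real n)
      + (ln (density_minorant (b1 n)) / ln (b1 n)) * (ln (b1 n) / ln (real n)) + ln (b0 n) / ln (real n))
      \<longlongrightarrow> 1 + 0 + (-\<alpha> - 1) * (1 / \<alpha> + l1 / \<alpha>) + (1 / \<alpha> + l0 / \<alpha>)) sequentially"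
    unfolding b0_def b1_def using filterlim_compose[OF ln_density_minorant_over_ln b1]
    by (intro tendsto_intros ln_scaling_powr_over_ln) (auto simp: o_def b1_def)
  moreover have "1 + 0 + (-\<alpha> - 1) * (1 / \<alpha> + l1 / \<alpha>) + (1 / \<alpha> + l0 / \<alpha>) = -l1 - (l1 - l0) / \<alpha>"
    using alpha_pos by (simp add: field_simps)
  moreover have "eventually (\<lambda>n. 1 + (ln m - 1 - l1) / ln (real n)
      + (ln (density_minorant (b1 n)) / ln (b1 n)) * (ln (b1 n) / ln (real n)) + ln (b0 n) / ln (real n)
      = ln (window_lower_bound l0 l1 m n) / ln (real n)) sequentially"
    using eventually_ge_at_top[of 2] eventually_scaling_gt_1
      filterlim_at_top_dense[THEN iffD1, OF b1, rule_format, of 1]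
  proof eventually_elim
    case (elim n)
    have "0 < b0 n" "0 < density_minorant (b1 n)"
      using elim density_minorant_pos[of "b1 n"] by (simp_all add: b0_def)
    then have "ln (window_lower_bound l0 l1 m n)
        = ln (real n) - 1 + ln (density_minorant (b1 n)) + ln (b0 n) - l1 + ln m"
      using elim \<open>m > 0\<close> by (simp add: window_lower_bound_def b0_def[symmetric] b1_def[symmetric] ln_mult ln_div)
    then show ?case using elim by (simp add: field_simps)
  qed
  ultimately show ?thesis by (simp add: Lim_transform_eventually)
qed

lemma ln_prob_Z_lower_rate:
  assumes A[measurable]: "A \<in> sets borel" and "A \<subseteq> {1..}" and "s \<ge> 0" "\<eta> > 0"
    and below: "\<And>c. c < s \<Longrightarrow> emeasure lborel {x \<in> A. ln x < c} = 0"
    and above: "\<And>c. s < c \<Longrightarrow> emeasure lborel {x \<in> A. ln x < c} \<noteq> 0"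
  shows "eventually (\<lambda>n. 0 < prob {\<omega> \<in> space M. Z n \<omega> \<in> A} \<and>
    -s - \<eta> < ln (prob {\<omega> \<in> space M. Z n \<omega> \<in> A}) / ln (real n)) sequentially"
proof -
  define k where "k = 1 + 2 / \<alpha>"
  have "k > 0" using alpha_pos by (simp add: k_def add_pos_pos)
  define \<delta> where "\<delta> = \<eta> / (2 * k)"
  have "\<delta> > 0" using \<open>\<eta> > 0\<close> \<open>k > 0\<close> by (simp add: \<delta>_def)
  define l0 where "l0 = max 0 (s - \<delta>)"
  define l1 where "l1 = s + \<delta>"
  define W where "W = A \<inter> {exp l0<..exp l1}"
  have [measurable]: "W \<in> sets borel" by (simp add: W_def)
  have "0 < measure lborel W"
    unfolding W_def l0_def l1_def using assms \<open>\<delta> > 0\<close> by (intro essinf_window_measure_pos) auto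
  have "-s - \<eta> < -l1 - (l1 - l0) / \<alpha>"
  proof -
    have "(l1 - l0) / \<alpha> \<le> 2 * \<delta> / \<alpha>"
      using alpha_pos by (intro divide_right_mono) (auto simp: l0_def l1_def)
    moreover have "\<delta> + 2 * \<delta> / \<alpha> = \<delta> * k" by (simp add: k_def algebra_simps)
    then have "\<delta> + 2 * \<delta> / \<alpha> = \<eta> / 2" using \<open>k > 0\<close> by (simp add: \<delta>_def)
    ultimately show ?thesis using \<open>\<eta> > 0\<close> by (simp add: l1_def)
  qed
  then have "eventually (\<lambda>n. -s - \<eta> < ln (window_lower_bound l0 l1 (measure lborel W) n) / ln (real n)) sequentially"
    using \<open>s \<ge> 0\<close> \<open>\<delta> > 0\<close> \<open>0 < measure lborel W\<close>
    by (intro order_tendstoD(1)[OF ln_window_lower_bound_over_ln]) (auto simp: l1_def)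
  moreover have "eventually (\<lambda>n. 0 < window_lower_bound l0 l1 (measure lborel W) n \<and>
      window_lower_bound l0 l1 (measure lborel W) n \<le> prob {\<omega> \<in> space M. Z n \<omega> \<in> W}) sequentially"
    using \<open>s \<ge> 0\<close> \<open>\<delta> > 0\<close> \<open>0 < measure lborel W\<close>
    by (intro eventually_window_lower_bound) (auto simp: W_def l0_def l1_def)
  ultimately show ?thesis using eventually_ge_at_top[of 2]
  proof eventually_elim
    case (elim n)
    have "prob {\<omega> \<in> space M. Z n \<omega> \<in> W} \<le> prob {\<omega> \<in> space M. Z n \<omega> \<in> A}"
      by (intro finite_measure_mono) (auto simp: W_def)
    then have "window_lower_bound l0 l1 (measure lborel W) n \<le> prob {\<omega> \<in> space M. Z n \<omega> \<in> A}"
      and "0 < prob {\<omega> \<in> space M. Z n \<omega> \<in> A}"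
      using elim by linarith+
    then have "ln (window_lower_bound l0 l1 (measure lborel W) n) / ln (real n)
        \<le> ln (prob {\<omega> \<in> space M. Z n \<omega> \<in> A}) / ln (real n)"
      using elim by (intro divide_right_mono) auto
    with elim \<open>0 < prob {\<omega> \<in> space M. Z n \<omega> \<in> A}\<close> show ?case by linarith
  qed
qed

lemma ln_prob_Z_upper_rate:
  assumes A[measurable]: "A \<in> sets borel" and "A \<subseteq> {1..}" and "s \<ge> 0" "\<eta> > 0"
    and below: "\<And>c. c < s \<Longrightarrow> emeasure lborel {x \<in> A. ln x < c} = 0"
    and pos: "eventually (\<lambda>n. 0 < prob {\<omega> \<in> space M. Z n \<omega> \<in> A}) sequentially"
  shows "eventually (\<lambda>n. ln (prob {\<omega> \<in> space M. Z n \<omega> \<in> A}) / ln (real n) < -s + \<eta>) sequentially"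
proof (cases "s \<le> \<eta> / 2")
  case True
  show ?thesis using pos eventually_ge_at_top[of 2]
  proof eventually_elim
    case (elim n)
    then have "ln (prob {\<omega> \<in> space M. Z n \<omega> \<in> A}) \<le> 0" by simp
    moreover have "ln (real n) > 0" using elim by simp
    ultimately have "ln (prob {\<omega> \<in> space M. Z n \<omega> \<in> A}) / ln (real n) \<le> 0"
      by (simp add: divide_nonpos_pos)
    then show ?case using True \<open>\<eta> > 0\<close> by linarith
  qed
next
  case False
  define s' where "s' = s - \<eta> / 2"
  have "0 < s'" "s' < s" using False \<open>\<eta> > 0\<close> by (auto simp: s'_def)
  define U where "U n = real n * survival (scaling n * real n powr (s' / \<alpha>))" for n
  have "((\<lambda>n. ln (U n) / ln (real n)) \<longlongrightarrow> -s') sequentially"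
    unfolding U_def using \<open>0 < s'\<close> by (rule ln_upper_tail_bound_over_ln)
  then have "eventually (\<lambda>n. ln (U n) / ln (real n) < -s + \<eta>) sequentially"
    by (rule order_tendstoD(2)) (use \<open>\<eta> > 0\<close> in \<open>simp add: s'_def\<close>)
  then show ?thesis using pos eventually_ge_at_top[of 2] eventually_scaling_gt_1
  proof eventually_elim
    case (elim n)
    then have "prob {\<omega> \<in> space M. Z n \<omega> \<in> A} \<le> U n"
      unfolding U_def using assms \<open>0 < s'\<close> \<open>s' < s\<close> by (intro prob_Z_in_le) auto
    then have "ln (prob {\<omega> \<in> space M. Z n \<omega> \<in> A}) \<le> ln (U n)"
      using elim by (subst ln_le_cancel_iff) auto
    then have "ln (prob {\<omega> \<in> space M. Z n \<omega> \<in> A}) / ln (real n) \<le> ln (U n) / ln (real n)"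
      using elim by (intro divide_right_mono) auto
    with elim show ?case by linarith
  qed
qed

lemma ln_prob_Z_over_ln_tendsto:
  assumes A[measurable]: "A \<in> sets borel" and "A \<subseteq> {1..}"
  shows "((\<lambda>n. ereal (1 / ln (real n)) * ln_ext (prob {\<omega> \<in> space M. Z n \<omega> \<in> A}))
    \<longlongrightarrow> - essinf_lebesgue A (\<lambda>x. ereal (ln x))) sequentially"
proof (cases "emeasure lborel A = 0")
  case True
  then have "A \<in> null_sets lborel" by auto
  have "eventually (\<lambda>n. ereal (1 / ln (real n)) * ln_ext (prob {\<omega> \<in> space M. Z n \<omega> \<in> A}) = -\<infinity>) sequentially"
    using eventually_ge_at_top[of 2] eventually_scaling_gt_1
    by eventually_elim (use prob_Z_null[OF \<open>A \<in> null_sets lborel\<close> \<open>A \<subseteq> {1..}\<close>] in \<open>simp add: ln_ext_def\<close>)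
  then show ?thesis
    using essinf_lebesgue_null_set[OF A True] by (simp add: tendsto_eventually)
next
  case False
  then obtain s where "s \<ge> 0" and ess: "essinf_lebesgue A (\<lambda>x. ereal (ln x)) = ereal s"
    and below: "\<And>c. c < s \<Longrightarrow> emeasure lborel {x \<in> A. ln x < c} = 0"
    and above: "\<And>c. s < c \<Longrightarrow> emeasure lborel {x \<in> A. ln x < c} \<noteq> 0"
    using essinf_lebesgue_ln[OF A \<open>A \<subseteq> {1..}\<close>] by blast
  have lower: "eventually (\<lambda>n. 0 < prob {\<omega> \<in> space M. Z n \<omega> \<in> A} \<and>
      -s - \<eta> < ln (prob {\<omega> \<in> space M. Z n \<omega> \<in> A}) / ln (real n)) sequentially" if "\<eta> > 0" for \<eta>
    using ln_prob_Z_lower_rate[OF A \<open>A \<subseteq> {1..}\<close> \<open>s \<ge> 0\<close> that below above] .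
  have pos: "eventually (\<lambda>n. 0 < prob {\<omega> \<in> space M. Z n \<omega> \<in> A}) sequentially"
    using lower[of 1] by (auto elim: eventually_mono)
  have "((\<lambda>n. ln (prob {\<omega> \<in> space M. Z n \<omega> \<in> A}) / ln (real n)) \<longlongrightarrow> -s) sequentially"
  proof (rule order_tendstoI)
    show "eventually (\<lambda>n. a < ln (prob {\<omega> \<in> space M. Z n \<omega> \<in> A}) / ln (real n)) sequentially"
      if "a < -s" for a
      using lower[of "-s - a"] that by (auto elim: eventually_mono)
    show "eventually (\<lambda>n. ln (prob {\<omega> \<in> space M. Z n \<omega> \<in> A}) / ln (real n) < a) sequentially"
      if "-s < a" for a
      using ln_prob_Z_upper_rate[OF A \<open>A \<subseteq> {1..}\<close> \<open>s \<ge> 0\<close> _ below pos, of "a + s"] that by simp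
  qed
  then have "((\<lambda>n. ereal (ln (prob {\<omega> \<in> space M. Z n \<omega> \<in> A}) / ln (real n))) \<longlongrightarrow> ereal (-s)) sequentially"
    by (rule tendsto_ereal)
  moreover have "eventually (\<lambda>n. ereal (ln (prob {\<omega> \<in> space M. Z n \<omega> \<in> A}) / ln (real n))
      = ereal (1 / ln (real n)) * ln_ext (prob {\<omega> \<in> space M. Z n \<omega> \<in> A})) sequentially"
    using pos by eventually_elim (simp add: ln_ext_def)
  ultimately show ?thesis unfolding ess uminus_ereal.simps(1) by (rule Lim_transform_eventually)
qed

end

theorem theorem1:
  fixes M :: "'a measure" and X :: "nat \<Rightarrow> 'a \<Rightarrow> real"
    and f L :: "real \<Rightarrow> real" and \<alpha> x0 x1 :: real and A :: "real set"
  assumes "prob_space M"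
    and "\<And>i. X i \<in> borel_measurable M"
    and "prob_space.indep_vars M (\<lambda>_. borel) X UNIV"
    and "\<And>i. distr M borel (X i) = distr M borel (X 0)"
    and "x0 > 0" and "\<alpha> > 0" and "slowly_varying L"
    and "\<And>x. x > x0 \<Longrightarrow> measure M {\<omega> \<in> space M. X 0 \<omega> > x} = x powr (-\<alpha>) * L x"
    and "distributed M lborel (X 0) (\<lambda>x. ennreal (f x))"
    and "\<And>x. f x \<ge> 0"
    and "\<And>x y. x1 \<le> x \<Longrightarrow> x \<le> y \<Longrightarrow> f y \<le> f x"
    and "A \<in> sets borel" and "A \<subseteq> {1..}"
  shows "let F = (\<lambda>x. measure M {\<omega> \<in> space M. X 0 \<omega> \<le> x});
             a = (\<lambda>n::nat. left_inverse F (1 - 1 / real n));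
             Z = (\<lambda>n \<omega>. if sample_max X n \<omega> > 0
                         then (sample_max X n \<omega> / a n) powr (\<alpha> / ln (real n)) else 0)
         in ((\<lambda>n. ereal (1 / ln (real n)) * ln_ext (measure M {\<omega> \<in> space M. Z n \<omega> \<in> A}))
               \<longlongrightarrow> - essinf_lebesgue A (\<lambda>x. ereal (ln x))) sequentially"
proof -
  interpret iid_pareto_tail M X f L \<alpha> x0 x1
    by (intro iid_pareto_tail.intro iid_pareto_tail_axioms.intro) (use assms in auto)
  show ?thesis
    using ln_prob_Z_over_ln_tendsto[OF assms(12,13)] unfolding Z_def scaling_def Let_def .
qed

end
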